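(* Let $M$ be a proper metric space, $X_1,\dots,X_n$ a coarsely transverse collection of half spaces in $M$, and $A_0=X_1\cdots X_n$, $A_i=X_i^cX_{i+1}\cdots X_n$ ($i=1,\dots,n$). Then $$[\mathbf 1\wedge X_1\wedge\dots\wedge X_n]=(-1)^n\, n!\,[A_0\wedge\dots\wedge A_n]\in HX^n(M).$$
   Context: Borel sets are identified with their indicator functions; $\mathbf 1$ is the constant function. For $Y\subseteq M$, $Y_R=\{x:d(x,Y)\le R\}$. Borel sets $X_1,\dots,X_n$ form a coarsely transverse collection of half spaces if $\bigcap_i (X_i)_R\cap(X_i^c)_R$ is bounded for all $R\ge0$. Coarse cohomology: $M^{n+1}$ has the max metric, $\Delta_R$ is the $R$-thickening of the multi-diagonal; $CX^n(M)$ is the space of locally bounded Borel $\theta:M^{n+1}\to\mathbb{C}$ with $\mathrm{supp}(\theta)\cap\Delta_R$ bounded for all $R$, differential $\delta\theta=\sum_{i=0}^{n+1}(-1)^i\pi_i^*\theta$ ($\pi_i$ omits coordinate $i$), and $HX^n(M)$ its cohomology. $f_0\wedge\dots\wedge f_n=\sum_{\tau\in S_{n+1}}\mathrm{sgn}(\tau)f_{\tau_0}\otimes\dots\otimes f_{\tau_n}$. *)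

theory Defs
  imports "HOL-Analysis.Analysis" "HOL-Combinatorics.Permutations"
begin

text \<open>Points of M^(n+1) are lists of length n+1; the max metric is used.
  Proper metric spaces are those of class heine_borel.\<close>

definition thick :: "'a::metric_space set \<Rightarrow> real \<Rightarrow> 'a set" where
  "thick Y R = {x. Y \<noteq> {} \<and> infdist x Y \<le> R}"

definition coarsely_transverse :: "nat \<Rightarrow> (nat \<Rightarrow> 'a::metric_space set) \<Rightarrow> bool" where
  "coarsely_transverse n X \<longleftrightarrow>
     (\<forall>i\<in>{1..n}. X i \<in> sets borel) \<and>
     (\<forall>R\<ge>0. bounded (\<Inter>i\<in>{1..n}. thick (X i) R \<inter> thick (- X i) R))"

definition bounded_tuples :: "'a::metric_space list set \<Rightarrow> bool" where
  "bounded_tuples S \<longleftrightarrow> (\<exists>c r. \<forall>xs\<in>S. \<forall>i<length xs. dist (xs ! i) c \<le> r)"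

definition diag_thick :: "nat \<Rightarrow> real \<Rightarrow> 'a::metric_space list set" where
  "diag_thick n R = {xs. length xs = Suc n \<and> (\<exists>x. \<forall>i<Suc n. dist (xs ! i) x \<le> R)}"

definition CX :: "nat \<Rightarrow> ('a::metric_space list \<Rightarrow> complex) set" where
  "CX n = {\<theta>.
     (\<forall>xs. length xs \<noteq> Suc n \<longrightarrow> \<theta> xs = 0) \<and>
     (\<theta> \<circ> (\<lambda>f. map f [0..<Suc n])) \<in> borel_measurable (PiM {..n} (\<lambda>_. borel)) \<and>
     (\<forall>S. bounded_tuples S \<longrightarrow> (\<exists>C. \<forall>xs\<in>S. norm (\<theta> xs) \<le> C)) \<and>
     (\<forall>R. bounded_tuples ({xs. \<theta> xs \<noteq> 0} \<inter> diag_thick n R))}"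

definition omit :: "nat \<Rightarrow> 'a list \<Rightarrow> 'a list" where
  "omit i xs = take i xs @ drop (Suc i) xs"

definition cobdry :: "nat \<Rightarrow> ('a list \<Rightarrow> complex) \<Rightarrow> 'a list \<Rightarrow> complex" where
  "cobdry n \<theta> xs = (if length xs = Suc (Suc n)
      then (\<Sum>i\<le>Suc n. (-1)^i * \<theta> (omit i xs)) else 0)"

definition same_HX_class :: "nat \<Rightarrow> ('a::metric_space list \<Rightarrow> complex) \<Rightarrow> ('a list \<Rightarrow> complex) \<Rightarrow> bool" where
  "same_HX_class n \<theta>1 \<theta>2 \<longleftrightarrow>
     \<theta>1 \<in> CX n \<and> \<theta>2 \<in> CX n \<and> cobdry n \<theta>1 = (\<lambda>_. 0) \<and> cobdry n \<theta>2 = (\<lambda>_. 0) \<and>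
     (if n = 0 then \<theta>1 = \<theta>2
      else (\<exists>\<psi>\<in>CX (n - 1). (\<lambda>xs. \<theta>1 xs - \<theta>2 xs) = cobdry (n - 1) \<psi>))"

definition wedge :: "nat \<Rightarrow> (nat \<Rightarrow> 'a \<Rightarrow> complex) \<Rightarrow> 'a list \<Rightarrow> complex" where
  "wedge n f xs = (if length xs = Suc n then
      (\<Sum>\<tau> | \<tau> permutes {..n}. of_int (sign \<tau>) * (\<Prod>i\<le>n. f (\<tau> i) (xs ! i))) else 0)"

definition ind :: "'a set \<Rightarrow> 'a \<Rightarrow> complex" where
  "ind Y = indicator Y"

end

theory Submission
  imports Defs "Jordan_Normal_Form.Determinant"
begin

text \<open>
  Both classes are represented by explicit cochains on tuples of points, and their difference is
  shown to be the coboundary of an explicit cochain \<open>\<psi>\<close>, built by induction on the number of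
  half spaces. Expanding the determinant along its first column turns the wedge with one more half
  space \<open>Y\<close> into a product of the 0-cochain \<open>ind Y\<close> with the wedge of the remaining ones, and a
  cocycle \<open>\<beta>\<close> times a 0-cochain is a coboundary up to a cup product term:
  \<open>\<delta>((\<Sum>\<^sub>i u x\<^sub>i - c v x\<^sub>0) \<beta>) = - wedge_left u \<beta> - c (\<delta>v \<smile> \<beta>)\<close>.
  The correction terms \<open>c v x\<^sub>0\<close> are chosen so that every cochain in sight vanishes on tuples lying on
  one side of some half space, and every cochain depends only on which half spaces contain each
  point. Coarse transversality turns the first property into bounded support near the diagonal;
  the second one makes the cochains Borel and bounded, as there are only finitely many patterns.
\<close>

section \<open>Cochains on lists of points\<close>

definition coboundary :: "('a list \<Rightarrow> complex) \<Rightarrow> 'a list \<Rightarrow> complex" where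
  "coboundary \<phi> xs = (\<Sum>i<length xs. (-1)^i * \<phi> (omit i xs))"

lemma cobdry_eq_coboundary:
  "cobdry n \<theta> xs = (if length xs = Suc (Suc n) then coboundary \<theta> xs else 0)"
  by (simp add: cobdry_def coboundary_def lessThan_Suc_atMost[symmetric])

lemma omit_Cons [simp]:
  "omit 0 (y # ys) = ys"
  "omit (Suc i) (y # ys) = y # omit i ys"
  by (simp_all add: omit_def)

lemma length_omit: "i < length xs \<Longrightarrow> length (omit i xs) = length xs - 1"
  by (simp add: omit_def)

lemma nth_omit:
  "j < length xs - 1 \<Longrightarrow> omit i xs ! j = (if j < i then xs ! j else xs ! Suc j)"
  by (auto simp: omit_def nth_append min_def)

lemma coboundary_Nil [simp]: "coboundary \<phi> [] = 0"
  by (simp add: coboundary_def)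

lemma coboundary_Cons:
  "coboundary \<phi> (y # ys) = \<phi> ys - coboundary (\<lambda>zs. \<phi> (y # zs)) ys"
  unfolding coboundary_def length_Cons sum.lessThan_Suc_shift by (simp add: sum_negf)

lemma coboundary_add: "coboundary (\<lambda>zs. f zs + g zs) xs = coboundary f xs + coboundary g xs"
  by (simp add: coboundary_def sum.distrib[symmetric] algebra_simps)

lemma coboundary_diff: "coboundary (\<lambda>zs. f zs - g zs) xs = coboundary f xs - coboundary g xs"
  by (simp add: coboundary_def sum_subtractf[symmetric] algebra_simps)

lemma coboundary_cmult: "coboundary (\<lambda>zs. c * f zs) xs = c * coboundary f xs"
  by (simp add: coboundary_def sum_distrib_left algebra_simps)

lemma coboundary_coboundary: "coboundary (coboundary \<phi>) xs = 0"
proof (induction xs arbitrary: \<phi>)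
  case (Cons y ys)
  have "(\<lambda>zs. coboundary \<phi> (y # zs)) = (\<lambda>zs. \<phi> zs - coboundary (\<lambda>ws. \<phi> (y # ws)) zs)"
    by (simp add: coboundary_Cons)
  then show ?case
    using Cons by (simp add: coboundary_Cons coboundary_diff)
qed simp

definition wedge_left :: "('a \<Rightarrow> complex) \<Rightarrow> ('a list \<Rightarrow> complex) \<Rightarrow> 'a list \<Rightarrow> complex" where
  "wedge_left f \<beta> xs = (\<Sum>i<length xs. (-1)^i * f (xs ! i) * \<beta> (omit i xs))"

lemma coboundary_eq_wedge_left_one: "coboundary \<phi> = wedge_left (\<lambda>_. 1) \<phi>"
  by (simp add: fun_eq_iff coboundary_def wedge_left_def)

text \<open>\<open>delta_cup f \<phi>\<close> is the Alexander--Whitney cup product \<open>\<delta>f \<smile> \<phi>\<close>.\<close>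

fun delta_cup :: "('a \<Rightarrow> complex) \<Rightarrow> ('a list \<Rightarrow> complex) \<Rightarrow> 'a list \<Rightarrow> complex" where
  "delta_cup f \<phi> (x0 # x1 # xs) = (f x1 - f x0) * \<phi> (x1 # xs)"
| "delta_cup f \<phi> _ = 0"

lemma sum_list_map_omit:
  fixes g :: "'a \<Rightarrow> 'b::ab_group_add"
  shows "i < length ys \<Longrightarrow> sum_list (map g (omit i ys)) = sum_list (map g ys) - g (ys ! i)"
  by (subst (2) id_take_nth_drop[of i ys]) (simp_all add: omit_def algebra_simps)

lemma coboundary_homotopy:
  assumes cocycle: "\<And>zs. coboundary \<beta> zs = 0" and "\<beta> [] = 0"
  shows "coboundary (\<lambda>xs. (sum_list (map u xs) - c * v (hd xs)) * \<beta> xs) ys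
    = - wedge_left u \<beta> ys - c * delta_cup v \<beta> ys"
proof -
  have sum_part: "coboundary (\<lambda>xs. sum_list (map u xs) * \<beta> xs) ys = - wedge_left u \<beta> ys"
  proof -
    have "coboundary (\<lambda>xs. sum_list (map u xs) * \<beta> xs) ys =
        (\<Sum>i<length ys. (-1)^i * ((sum_list (map u ys) - u (ys ! i)) * \<beta> (omit i ys)))"
      unfolding coboundary_def by (rule sum.cong) (auto simp: sum_list_map_omit)
    also have "\<dots> = sum_list (map u ys) * coboundary \<beta> ys - wedge_left u \<beta> ys"
      by (simp add: coboundary_def wedge_left_def sum_distrib_left sum_subtractf[symmetric] algebra_simps)
    finally show ?thesis using cocycle by simp
  qed
  have hd_part: "coboundary (\<lambda>xs. v (hd xs) * \<beta> xs) ys = delta_cup v \<beta> ys"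
  proof (cases ys)
    case (Cons y zs)
    have "coboundary (\<lambda>xs. v (hd xs) * \<beta> xs) (y # zs)
        = v (hd zs) * \<beta> zs - v y * coboundary (\<lambda>ws. \<beta> (y # ws)) zs"
      by (simp add: coboundary_Cons coboundary_cmult)
    also have "\<dots> = v (hd zs) * \<beta> zs - v y * \<beta> zs + v y * coboundary \<beta> (y # zs)"
      by (simp add: coboundary_Cons algebra_simps)
    also have "\<dots> = delta_cup v \<beta> (y # zs)"
      using assms by (cases zs) (simp_all add: algebra_simps)
    finally show ?thesis using Cons by simp
  qed simp
  show ?thesis
    unfolding left_diff_distrib mult.assoc coboundary_diff coboundary_cmult sum_part hd_part ..
qed

lemma coboundary_delta_cup:
  assumes "\<phi> [] = 0"
  shows "coboundary (delta_cup f \<phi>) ys = - delta_cup f (coboundary \<phi>) ys"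
proof (cases ys rule: remdups_adj.cases)
  case (3 y0 y1 rest)
  have "coboundary (delta_cup f \<phi>) (y0 # y1 # rest) =
      delta_cup f \<phi> (y1 # rest) - delta_cup f \<phi> (y0 # rest)
      + (f y1 - f y0) * coboundary (\<lambda>ws. \<phi> (y1 # ws)) rest"
    by (simp add: coboundary_Cons coboundary_cmult)
  also have "\<dots> = - delta_cup f (coboundary \<phi>) (y0 # y1 # rest)"
    using assms by (cases rest) (simp_all add: coboundary_Cons algebra_simps)
  finally show ?thesis using 3 by simp
qed (use assms in \<open>simp_all add: coboundary_Cons\<close>)


section \<open>Wedge products as determinants\<close>

definition wedge_mat :: "nat \<Rightarrow> (nat \<Rightarrow> 'a \<Rightarrow> complex) \<Rightarrow> 'a list \<Rightarrow> complex mat" where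
  "wedge_mat n F xs = mat (Suc n) (Suc n) (\<lambda>(i, j). F j (xs ! i))"

lemma wedge_mat_carrier [simp]: "wedge_mat n F xs \<in> carrier_mat (Suc n) (Suc n)"
  by (simp add: wedge_mat_def)

lemma wedge_length: "length xs \<noteq> Suc n \<Longrightarrow> wedge n F xs = 0"
  by (simp add: wedge_def)

lemma wedge_nonzero_length: "wedge n F xs \<noteq> 0 \<Longrightarrow> length xs = Suc n"
  using wedge_length by blast

lemma wedge_eq_det: "length xs = Suc n \<Longrightarrow> wedge n F xs = det (wedge_mat n F xs)"
proof -
  assume "length xs = Suc n"
  moreover have "wedge_mat n F xs $$ (i, p i) = F (p i) (xs ! i)" if "p permutes {..n}" "i \<le> n" for p i
    using that permutes_in_image[OF that(1), of i] by (simp add: wedge_mat_def less_Suc_eq_le)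
  ultimately show ?thesis
    unfolding det_def'[OF wedge_mat_carrier] atLeast0LessThan lessThan_Suc_atMost wedge_def
    by (auto intro!: sum.cong prod.cong)
qed

lemma wedge_nonzero_imp_permutation:
  assumes "wedge n F xs \<noteq> 0"
  obtains \<tau> where "\<tau> permutes {..n}" "\<And>i. i \<le> n \<Longrightarrow> F (\<tau> i) (xs ! i) \<noteq> 0"
proof -
  from assms obtain \<tau> where "\<tau> permutes {..n}" "(\<Prod>i\<le>n. F (\<tau> i) (xs ! i)) \<noteq> 0"
    by (auto simp: wedge_def split: if_splits elim!: sum.not_neutral_contains_not_neutral)
  then show ?thesis using that by auto
qed

lemma wedge_zero_column:
  assumes "j \<le> n" "\<And>x. x \<in> set xs \<Longrightarrow> F j x = 0"
  shows "wedge n F xs = 0"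
proof (rule ccontr)
  assume nonzero: "wedge n F xs \<noteq> 0"
  then have "length xs = Suc n" using wedge_length by blast
  from nonzero obtain \<tau> where \<tau>: "\<tau> permutes {..n}" "\<And>i. i \<le> n \<Longrightarrow> F (\<tau> i) (xs ! i) \<noteq> 0"
    using wedge_nonzero_imp_permutation by blast
  obtain i where "i \<le> n" "\<tau> i = j"
    using permutes_image[OF \<tau>(1)] assms(1) by (metis atMost_iff imageE)
  then show False
    using \<tau>(2)[of i] assms(2) \<open>length xs = Suc n\<close> by (simp add: less_Suc_eq_le)
qed

lemma wedge_equal_columns:
  assumes "i \<noteq> j" "i \<le> n" "j \<le> n" "\<And>x. x \<in> set xs \<Longrightarrow> F i x = F j x"
  shows "wedge n F xs = 0"
proof (cases "length xs = Suc n")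
  case True
  have "col (wedge_mat n F xs) i = col (wedge_mat n F xs) j"
    using assms True by (intro eq_vecI) (auto simp: wedge_mat_def)
  then show ?thesis
    using assms True by (simp add: wedge_eq_det det_identical_columns[OF wedge_mat_carrier])
qed (simp add: wedge_length)

lemma wedge_cong:
  assumes "\<And>j x. j \<le> n \<Longrightarrow> x \<in> set xs \<Longrightarrow> F j x = G j x"
  shows "wedge n F xs = wedge n G xs"
proof (cases "length xs = Suc n")
  case True
  then have "wedge_mat n F xs = wedge_mat n G xs"
    using assms by (intro eq_matI) (auto simp: wedge_mat_def)
  then show ?thesis using True by (simp add: wedge_eq_det)
qed (simp add: wedge_length)

lemma wedge_Suc: "wedge (Suc m) F xs = wedge_left (F 0) (wedge m (\<lambda>j. F (Suc j))) xs"
proof (cases "length xs = Suc (Suc m)")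
  case True
  let ?A = "wedge_mat (Suc m) F xs"
  have "wedge (Suc m) F xs = det ?A" using True by (rule wedge_eq_det)
  also have "\<dots> = (\<Sum>i<Suc (Suc m). ?A $$ (i, 0) * cofactor ?A i 0)"
    by (rule laplace_expansion_column[OF wedge_mat_carrier]) simp
  also have "\<dots> = (\<Sum>i<length xs. (-1)^i * F 0 (xs ! i) * wedge m (\<lambda>j. F (Suc j)) (omit i xs))"
  proof (rule sum.cong)
    fix i assume i: "i \<in> {..<length xs}"
    have "mat_delete ?A i 0 = wedge_mat m (\<lambda>j. F (Suc j)) (omit i xs)"
      using True i by (intro eq_matI) (auto simp: mat_delete_def wedge_mat_def nth_omit)
    then show "?A $$ (i, 0) * cofactor ?A i 0
        = (-1)^i * F 0 (xs ! i) * wedge m (\<lambda>j. F (Suc j)) (omit i xs)"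
      using i True by (simp add: cofactor_def wedge_mat_def wedge_eq_det length_omit)
  qed (use True in simp)
  finally show ?thesis by (simp add: wedge_left_def)
qed (auto simp: wedge_left_def wedge_length length_omit intro!: sum.neutral)

lemma wedge_swap_columns: "wedge (Suc m) (F(0 := F 1, 1 := F 0)) xs = - wedge (Suc m) F xs"
proof (cases "length xs = Suc (Suc m)")
  case True
  have "wedge_mat (Suc m) (F(0 := F 1, 1 := F 0)) xs = swapcols 0 1 (wedge_mat (Suc m) F xs)"
    by (intro eq_matI) (auto simp: wedge_mat_def mat_swapcols_def)
  then show ?thesis
    using True by (simp add: wedge_eq_det det_swapcols[OF _ _ _ wedge_mat_carrier])
qed (simp add: wedge_length)

lemma wedge_add_column: "wedge (Suc m) (F(1 := (\<lambda>x. F 1 x + F 0 x))) xs = wedge (Suc m) F xs"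
proof (cases "length xs = Suc (Suc m)")
  case True
  have "wedge_mat (Suc m) (F(1 := (\<lambda>x. F 1 x + F 0 x))) xs = addcol 1 1 0 (wedge_mat (Suc m) F xs)"
    by (intro eq_matI) (auto simp: wedge_mat_def mat_addcol_def)
  then show ?thesis
    using True by (simp add: wedge_eq_det det_addcol[OF _ _ wedge_mat_carrier])
qed (simp add: wedge_length)

section \<open>Transverse cochains\<close>

definition same_sides :: "'a set list \<Rightarrow> 'a \<Rightarrow> 'a \<Rightarrow> bool" where
  "same_sides Ys x y \<longleftrightarrow> (\<forall>Y\<in>set Ys. x \<in> Y \<longleftrightarrow> y \<in> Y)"

definition pattern_invariant :: "'a set list \<Rightarrow> ('a list \<Rightarrow> 'b) \<Rightarrow> bool" where
  "pattern_invariant Ys \<phi> \<longleftrightarrow> (\<forall>xs ys. list_all2 (same_sides Ys) xs ys \<longrightarrow> \<phi> xs = \<phi> ys)"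

lemma ind_eq_0_iff [simp]: "ind S x = 0 \<longleftrightarrow> x \<notin> S"
  by (simp add: ind_def indicator_def)

lemma ind_cong: "(x \<in> S \<longleftrightarrow> y \<in> S) \<Longrightarrow> ind S x = ind S y"
  by (simp add: ind_def indicator_def)

lemma pattern_invariant_mono:
  assumes "set Zs \<subseteq> set Ys" "pattern_invariant Zs \<phi>"
  shows "pattern_invariant Ys \<phi>"
proof -
  have "list_all2 (same_sides Zs) xs ys" if "list_all2 (same_sides Ys) xs ys" for xs ys
    using that by (rule list_all2_mono) (use assms(1) in \<open>auto simp: same_sides_def\<close>)
  then show ?thesis
    using assms(2) by (simp add: pattern_invariant_def)
qed

lemma pattern_invariant_combine:
  "pattern_invariant Ys \<phi> \<Longrightarrow> pattern_invariant Ys \<psi> \<Longrightarrow>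
    pattern_invariant Ys (\<lambda>xs. h (\<phi> xs) (\<psi> xs))"
  by (simp add: pattern_invariant_def)

lemma pattern_invariant_map:
  assumes "\<And>x y. same_sides Ys x y \<Longrightarrow> f x = f y"
  shows "pattern_invariant Ys (\<lambda>xs. h (map f xs))"
proof -
  have "map f xs = map f ys" if "list_all2 (same_sides Ys) xs ys" for xs ys
    using that by (induction rule: list_all2_induct) (simp_all add: assms)
  then show ?thesis by (simp add: pattern_invariant_def)
qed

lemma pattern_invariant_hd:
  assumes "\<And>x y. same_sides Ys x y \<Longrightarrow> f x = f y"
  shows "pattern_invariant Ys (\<lambda>xs. f (hd xs))"
  unfolding pattern_invariant_def by (metis assms list.rel_sel)

lemma pattern_invariant_delta_cup:
  assumes "\<And>x y. same_sides Ys x y \<Longrightarrow> f x = f y" and "pattern_invariant Ys \<phi>"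
  shows "pattern_invariant Ys (delta_cup f \<phi>)"
  unfolding pattern_invariant_def
proof (intro allI impI)
  fix xs ys assume "list_all2 (same_sides Ys) xs ys"
  then show "delta_cup f \<phi> xs = delta_cup f \<phi> ys"
  proof (cases xs rule: remdups_adj.cases)
    case (3 x0 x1 rest)
    with \<open>list_all2 (same_sides Ys) xs ys\<close> obtain y0 y1 ys' where
      "ys = y0 # y1 # ys'" "same_sides Ys x0 y0" "list_all2 (same_sides Ys) (x1 # rest) (y1 # ys')"
      by (auto simp: list_all2_Cons1)
    then show ?thesis
      using 3 assms unfolding pattern_invariant_def by auto
  qed (auto simp: list_all2_Cons1)
qed

lemma pattern_invariant_wedge:
  assumes "\<And>j x y. j \<le> n \<Longrightarrow> same_sides Ys x y \<Longrightarrow> F j x = F j y"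
  shows "pattern_invariant Ys (wedge n F)"
  unfolding pattern_invariant_def
proof (intro allI impI)
  fix xs ys assume rel: "list_all2 (same_sides Ys) xs ys"
  then have "length xs = length ys" by (rule list_all2_lengthD)
  moreover have "wedge_mat n F xs = wedge_mat n F ys" if "length xs = Suc n"
    using that rel assms \<open>length xs = length ys\<close>
    by (intro eq_matI) (auto simp: wedge_mat_def list_all2_nthD)
  ultimately show "wedge n F xs = wedge n F ys"
    by (metis wedge_eq_det wedge_length)
qed

definition separates :: "'a set \<Rightarrow> 'a list \<Rightarrow> bool" where
  "separates Y xs \<longleftrightarrow> (\<exists>x\<in>set xs. x \<in> Y) \<and> (\<exists>x\<in>set xs. x \<notin> Y)"

definition transverse_cochain :: "'a set list \<Rightarrow> nat \<Rightarrow> ('a list \<Rightarrow> complex) \<Rightarrow> bool" where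
  "transverse_cochain Ys k \<phi> \<longleftrightarrow>
     (\<forall>xs. \<phi> xs \<noteq> 0 \<longrightarrow> length xs = k \<and> (\<forall>Y\<in>set Ys. separates Y xs)) \<and>
     pattern_invariant Ys \<phi>"

lemma transverse_cochainD:
  assumes "transverse_cochain Ys k \<phi>"
  shows "\<phi> xs \<noteq> 0 \<Longrightarrow> length xs = k" "\<phi> xs \<noteq> 0 \<Longrightarrow> Y \<in> set Ys \<Longrightarrow> separates Y xs"
    and "pattern_invariant Ys \<phi>"
  using assms by (auto simp: transverse_cochain_def)

lemma not_separates_iff: "\<not> separates Y xs \<longleftrightarrow> (\<forall>x\<in>set xs. x \<in> Y) \<or> (\<forall>x\<in>set xs. x \<notin> Y)"
  unfolding separates_def by blast

lemma separates_mono: "set xs \<subseteq> set ys \<Longrightarrow> separates Y xs \<Longrightarrow> separates Y ys"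
  unfolding separates_def by blast

lemma not_separates_ind:
  "\<not> separates Y xs \<Longrightarrow> x \<in> set xs \<Longrightarrow> x' \<in> set xs \<Longrightarrow> ind Y x = ind Y x'"
  by (rule ind_cong) (auto simp: separates_def)

lemma transverse_cochain_combine:
  assumes "transverse_cochain Ys k \<phi>" "transverse_cochain Ys k \<psi>" "h 0 0 = 0"
  shows "transverse_cochain Ys k (\<lambda>xs. h (\<phi> xs) (\<psi> xs))"
proof -
  have "length xs = k \<and> (\<forall>Y\<in>set Ys. separates Y xs)" if "h (\<phi> xs) (\<psi> xs) \<noteq> 0" for xs
  proof -
    from that assms(3) have "\<phi> xs \<noteq> 0 \<or> \<psi> xs \<noteq> 0" by auto
    then show ?thesis
      using transverse_cochainD(1,2)[OF assms(1)] transverse_cochainD(1,2)[OF assms(2)] by blast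
  qed
  moreover have "pattern_invariant Ys (\<lambda>xs. h (\<phi> xs) (\<psi> xs))"
    using transverse_cochainD(3)[OF assms(1)] transverse_cochainD(3)[OF assms(2)]
    by (rule pattern_invariant_combine)
  ultimately show ?thesis
    unfolding transverse_cochain_def by blast
qed

lemma transverse_cochain_cmult:
  "transverse_cochain Ys k \<phi> \<Longrightarrow> transverse_cochain Ys k (\<lambda>xs. c * \<phi> xs)"
  unfolding transverse_cochain_def pattern_invariant_def by auto

lemma transverse_cochain_mult:
  assumes "transverse_cochain Zs k \<phi>" "pattern_invariant (Y # Zs) h"
    and "\<And>xs. \<phi> xs \<noteq> 0 \<Longrightarrow> \<not> separates Y xs \<Longrightarrow> h xs = 0"
  shows "transverse_cochain (Y # Zs) k (\<lambda>xs. h xs * \<phi> xs)"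
proof -
  have "pattern_invariant (Y # Zs) \<phi>"
    using transverse_cochainD(3)[OF assms(1)] by (rule pattern_invariant_mono[rotated]) auto
  then have "pattern_invariant (Y # Zs) (\<lambda>xs. h xs * \<phi> xs)"
    using assms(2) by (rule pattern_invariant_combine[where h = "\<lambda>a b. b * a"])
  with transverse_cochainD(1,2)[OF assms(1)] assms(3) show ?thesis
    unfolding transverse_cochain_def by auto
qed

lemma transverse_cochain_delta_cup:
  assumes "transverse_cochain Zs k \<phi>" "\<phi> [] = 0"
  shows "transverse_cochain (Y # Zs) (Suc k) (delta_cup (ind Y) \<phi>)"
proof -
  have "length xs = Suc k \<and> (\<forall>Y'\<in>set (Y # Zs). separates Y' xs)"
    if nonzero: "delta_cup (ind Y) \<phi> xs \<noteq> 0" for xs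
  proof -
    obtain x0 x1 rest where xs: "xs = x0 # x1 # rest"
      using nonzero assms(2) by (cases xs rule: remdups_adj.cases) auto
    with nonzero have jump: "ind Y x1 \<noteq> ind Y x0" and tail: "\<phi> (x1 # rest) \<noteq> 0"
      by auto
    have "separates Y xs"
    proof (rule ccontr)
      assume "\<not> separates Y xs"
      then have "ind Y x1 = ind Y x0" by (rule not_separates_ind) (simp_all add: xs)
      with jump show False ..
    qed
    moreover have "separates Y' xs" if "Y' \<in> set Zs" for Y'
      using transverse_cochainD(2)[OF assms(1) tail that]
      by (rule separates_mono[rotated]) (auto simp: xs)
    moreover have "length xs = Suc k"
      using transverse_cochainD(1)[OF assms(1) tail] by (simp add: xs)
    ultimately show ?thesis by simp
  qed
  moreover have "pattern_invariant (Y # Zs) (delta_cup (ind Y) \<phi>)"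
  proof (rule pattern_invariant_delta_cup)
    show "ind Y x = ind Y y" if "same_sides (Y # Zs) x y" for x y
      using that by (intro ind_cong) (simp add: same_sides_def)
    show "pattern_invariant (Y # Zs) \<phi>"
      using transverse_cochainD(3)[OF assms(1)] by (rule pattern_invariant_mono[rotated]) auto
  qed
  ultimately show ?thesis
    unfolding transverse_cochain_def by blast
qed

section \<open>The two cocycles\<close>

definition half_space_cocycle :: "'a set list \<Rightarrow> 'a list \<Rightarrow> complex" where
  "half_space_cocycle Ys = wedge (length Ys) (\<lambda>i. if i = 0 then (\<lambda>_. 1) else ind (Ys ! (i - 1)))"

definition cell :: "'a set list \<Rightarrow> nat \<Rightarrow> 'a set" where
  "cell Ys i = (if i = 0 then \<Inter>(set Ys) else - Ys ! (i - 1) \<inter> \<Inter>(set (drop i Ys)))"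

definition cell_cocycle :: "'a set list \<Rightarrow> 'a list \<Rightarrow> complex" where
  "cell_cocycle Ys = wedge (length Ys) (\<lambda>i. ind (cell Ys i))"

lemma half_space_cocycle_Cons:
  "half_space_cocycle (Y # Zs) xs = - wedge_left (ind Y) (half_space_cocycle Zs) xs"
proof -
  let ?F = "\<lambda>i. if i = 0 then (\<lambda>_. 1) else ind ((Y # Zs) ! (i - 1))"
  have swap: "(\<lambda>j. (?F(0 := ?F 1, 1 := ?F 0)) (Suc j))
      = (\<lambda>j. if j = 0 then (\<lambda>_. 1) else ind (Zs ! (j - 1)))"
  proof
    fix j show "(?F(0 := ?F 1, 1 := ?F 0)) (Suc j) = (if j = 0 then (\<lambda>_. 1) else ind (Zs ! (j - 1)))"
      by (cases j) simp_all
  qed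
  have first: "(?F(0 := ?F 1, 1 := ?F 0)) 0 = ind Y"
    by simp
  have "half_space_cocycle (Y # Zs) xs = - wedge (Suc (length Zs)) (?F(0 := ?F 1, 1 := ?F 0)) xs"
    unfolding half_space_cocycle_def length_Cons wedge_swap_columns[of "length Zs" ?F xs] minus_minus ..
  also have "\<dots> = - wedge_left (ind Y) (half_space_cocycle Zs) xs"
    unfolding wedge_Suc half_space_cocycle_def swap first ..
  finally show ?thesis .
qed

lemma cell_cocycle_Cons:
  "cell_cocycle (Y # Zs) xs = wedge_left (ind (Y \<inter> \<Inter>(set Zs))) (cell_cocycle Zs) xs"
proof -
  let ?F = "\<lambda>i. ind (cell (Y # Zs) i)"
  have "cell (Y # Zs) 1 = - Y \<inter> \<Inter>(set Zs)" "cell (Y # Zs) 0 = Y \<inter> \<Inter>(set Zs)"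
    by (simp_all add: cell_def)
  then have "?F 1 x + ?F 0 x = ind (cell Zs 0) x" for x
    by (simp add: cell_def ind_def indicator_def)
  then have "cell_cocycle (Y # Zs) xs = wedge (Suc (length Zs)) (?F(1 := ind (cell Zs 0))) xs"
    using wedge_add_column[of "length Zs" ?F xs] by (simp add: cell_cocycle_def)
  also have "\<dots> = wedge_left (ind (Y \<inter> \<Inter>(set Zs))) (cell_cocycle Zs) xs"
  proof -
    have "(\<lambda>j. (?F(1 := ind (cell Zs 0))) (Suc j)) = (\<lambda>j. ind (cell Zs j))"
    proof
      fix j show "(?F(1 := ind (cell Zs 0))) (Suc j) = ind (cell Zs j)"
        by (cases j) (simp_all add: cell_def)
    qed
    then show ?thesis
      unfolding wedge_Suc cell_cocycle_def by (simp add: cell_def[of "Y # Zs" 0])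
  qed
  finally show ?thesis .
qed

lemma coboundary_half_space_cocycle: "coboundary (half_space_cocycle Ys) xs = 0"
proof -
  let ?F = "\<lambda>i. if i = 0 then (\<lambda>_. 1) else ind (Ys ! (i - 1))"
  let ?G = "\<lambda>i. case i of 0 \<Rightarrow> (\<lambda>_. 1) | Suc j \<Rightarrow> ?F j"
  have shift: "(\<lambda>j. ?G (Suc j)) = ?F"
    by simp
  have "coboundary (half_space_cocycle Ys) xs = wedge_left (?G 0) (wedge (length Ys) (\<lambda>j. ?G (Suc j))) xs"
    unfolding coboundary_eq_wedge_left_one half_space_cocycle_def shift by simp
  also have "\<dots> = wedge (Suc (length Ys)) ?G xs"
    by (rule wedge_Suc[symmetric])
  also have "\<dots> = 0"
    by (rule wedge_equal_columns[of 0 1]) simp_all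
  finally show ?thesis .
qed

lemma transverse_cochain_half_space_cocycle:
  "transverse_cochain Ys (Suc (length Ys)) (half_space_cocycle Ys)"
proof -
  let ?F = "\<lambda>i. if i = 0 then (\<lambda>_. 1) else ind (Ys ! (i - 1))"
  have "separates Y xs" if nonzero: "half_space_cocycle Ys xs \<noteq> 0" and "Y \<in> set Ys" for Y xs
  proof (rule ccontr)
    assume "\<not> separates Y xs"
    obtain k where k: "k < length Ys" "Y = Ys ! k"
      using \<open>Y \<in> set Ys\<close> by (auto simp: in_set_conv_nth)
    from \<open>\<not> separates Y xs\<close> have "wedge (length Ys) ?F xs = 0"
      unfolding not_separates_iff
    proof
      assume "\<forall>x\<in>set xs. x \<in> Y"
      then show ?thesis
        using k by (intro wedge_equal_columns[of 0 "Suc k"]) (simp_all add: ind_def)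
    next
      assume "\<forall>x\<in>set xs. x \<notin> Y"
      then show ?thesis
        using k by (intro wedge_zero_column[of "Suc k"]) (simp_all add: ind_def)
    qed
    with nonzero show False by (simp add: half_space_cocycle_def)
  qed
  moreover have "?F j x = ?F j y" if "j \<le> length Ys" "same_sides Ys x y" for j x y
  proof (cases "j = 0")
    case False
    with that(1) have "Ys ! (j - 1) \<in> set Ys" by simp
    with False that(2) show ?thesis
      by (simp add: same_sides_def) (rule ind_cong, blast)
  qed simp
  then have "pattern_invariant Ys (half_space_cocycle Ys)"
    unfolding half_space_cocycle_def by (rule pattern_invariant_wedge)
  ultimately show ?thesis
    unfolding transverse_cochain_def half_space_cocycle_def using wedge_length by blast
qed

lemma same_sides_mem_Inter:
  "same_sides Ys x y \<Longrightarrow> set Zs \<subseteq> set Ys \<Longrightarrow> x \<in> \<Inter>(set Zs) \<longleftrightarrow> y \<in> \<Inter>(set Zs)"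
  unfolding same_sides_def by blast

lemma cell_subset_half_space: "i < j \<Longrightarrow> j \<le> length Ys \<Longrightarrow> cell Ys i \<subseteq> Ys ! (j - 1)"
proof -
  assume "i < j" "j \<le> length Ys"
  then have "drop i Ys ! (j - 1 - i) = Ys ! (j - 1)" "j - 1 - i < length (drop i Ys)"
    by simp_all
  then have "Ys ! (j - 1) \<in> set (drop i Ys)"
    by (metis nth_mem)
  then show ?thesis
    using set_drop_subset[of i Ys] by (auto simp: cell_def)
qed

lemma disjoint_family_cell: "disjoint_family_on (cell Ys) {..length Ys}"
proof -
  have "cell Ys i \<inter> cell Ys j = {}" if "i < j" "j \<le> length Ys" for i j
  proof -
    have "cell Ys j \<subseteq> - Ys ! (j - 1)"
      using that by (auto simp: cell_def)
    then show ?thesis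
      using cell_subset_half_space[OF that] by blast
  qed
  then show ?thesis
    unfolding disjoint_family_on_def by (metis Int_commute atMost_iff linorder_neqE_nat)
qed

lemma same_sides_ind_cell:
  assumes "i \<le> length Ys" "same_sides Ys x y"
  shows "ind (cell Ys i) x = ind (cell Ys i) y"
proof (rule ind_cong)
  have "Ys ! (i - 1) \<in> set Ys" if "i \<noteq> 0"
    using that assms(1) by simp
  then show "x \<in> cell Ys i \<longleftrightarrow> y \<in> cell Ys i"
    using same_sides_mem_Inter[OF assms(2), of Ys] same_sides_mem_Inter[OF assms(2), of "drop i Ys"]
      assms(2) set_drop_subset[of i Ys]
    by (auto simp: cell_def same_sides_def)
qed

lemma transverse_cochain_cell_cocycle:
  "transverse_cochain Ys (Suc (length Ys)) (cell_cocycle Ys)"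
proof -
  have "separates Y xs" if nonzero: "cell_cocycle Ys xs \<noteq> 0" and "Y \<in> set Ys" for Y xs
  proof (rule ccontr)
    assume "\<not> separates Y xs"
    obtain k where k: "k < length Ys" "Y = Ys ! k"
      using \<open>Y \<in> set Ys\<close> by (auto simp: in_set_conv_nth)
    from \<open>\<not> separates Y xs\<close> have "wedge (length Ys) (\<lambda>i. ind (cell Ys i)) xs = 0"
      unfolding not_separates_iff
    proof
      assume "\<forall>x\<in>set xs. x \<in> Y"
      moreover have "cell Ys (Suc k) \<subseteq> - Y"
        using k by (auto simp: cell_def)
      ultimately show ?thesis
        using k by (intro wedge_zero_column[of "Suc k"]) auto
    next
      assume "\<forall>x\<in>set xs. x \<notin> Y"
      moreover have "cell Ys 0 \<subseteq> Y"
        using k by (auto simp: cell_def)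
      ultimately show ?thesis
        by (intro wedge_zero_column[of 0]) auto
    qed
    with nonzero show False by (simp add: cell_cocycle_def)
  qed
  moreover have "pattern_invariant Ys (cell_cocycle Ys)"
    unfolding cell_cocycle_def by (rule pattern_invariant_wedge) (rule same_sides_ind_cell)
  ultimately show ?thesis
    unfolding transverse_cochain_def cell_cocycle_def using wedge_length by blast
qed

lemma sum_list_indicator_eq_1_if_wedge_nonzero:
  assumes nonzero: "wedge n (\<lambda>i. ind (C i)) xs \<noteq> 0"
    and disjoint: "disjoint_family_on C {..n}" and "j \<le> n"
  shows "sum_list (map (ind (C j)) xs) = 1"
proof -
  have len: "length xs = Suc n"
    using nonzero wedge_length by blast
  obtain \<tau> where \<tau>: "\<tau> permutes {..n}" "\<And>i. i \<le> n \<Longrightarrow> ind (C (\<tau> i)) (xs ! i) \<noteq> 0"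
    using wedge_nonzero_imp_permutation[OF nonzero] by blast
  obtain i0 where i0: "i0 \<le> n" "\<tau> i0 = j"
    using permutes_image[OF \<tau>(1)] \<open>j \<le> n\<close> by (metis atMost_iff imageE)
  have "xs ! i \<in> C j \<longleftrightarrow> i = i0" if "i \<le> n" for i
  proof
    assume "xs ! i \<in> C j"
    moreover have "xs ! i \<in> C (\<tau> i)" "\<tau> i \<le> n"
      using \<tau>(2)[OF that] permutes_in_image[OF \<tau>(1)] that by auto
    ultimately have "\<tau> i = \<tau> i0"
      using disjoint \<open>j \<le> n\<close> i0(2) unfolding disjoint_family_on_def by blast
    then show "i = i0"
      using permutes_inj[OF \<tau>(1)] by (simp add: inj_eq)
  next
    assume "i = i0"
    then show "xs ! i \<in> C j"
      using \<tau>(2)[OF i0(1)] i0(2) by auto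
  qed
  have "sum_list (map (ind (C j)) xs) = (\<Sum>i<Suc n. ind (C j) (xs ! i))"
    by (simp add: sum_list_sum_nth len atLeast0LessThan)
  also have "\<dots> = (\<Sum>i<Suc n. if i = i0 then 1 else 0)"
    using \<open>\<And>i. i \<le> n \<Longrightarrow> xs ! i \<in> C j \<longleftrightarrow> i = i0\<close>
    by (intro sum.cong) (auto simp: ind_def)
  also have "\<dots> = 1"
    using i0(1) by simp
  finally show ?thesis .
qed

section \<open>A transverse primitive\<close>

definition signed_fact :: "nat \<Rightarrow> complex" where
  "signed_fact n = (-1)^n * of_nat (fact n)"

lemma signed_fact_Suc: "signed_fact (Suc m) = - of_nat (Suc m) * signed_fact m"
  by (simp add: signed_fact_def algebra_simps)

lemma signed_fact_nonzero: "signed_fact n \<noteq> 0"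
  by (simp add: signed_fact_def)

lemma coboundary_cell_cocycle:
  assumes "\<And>xs. coboundary \<psi> xs = half_space_cocycle Ys xs - signed_fact (length Ys) * cell_cocycle Ys xs"
  shows "coboundary (cell_cocycle Ys) xs = 0"
proof -
  have "coboundary \<psi> = (\<lambda>xs. half_space_cocycle Ys xs - signed_fact (length Ys) * cell_cocycle Ys xs)"
    using assms by (rule ext)
  then have "0 = coboundary (\<lambda>xs. half_space_cocycle Ys xs - signed_fact (length Ys) * cell_cocycle Ys xs) xs"
    using coboundary_coboundary[of \<psi> xs] by simp
  also have "\<dots> = - signed_fact (length Ys) * coboundary (cell_cocycle Ys) xs"
    by (simp add: coboundary_diff coboundary_cmult coboundary_half_space_cocycle)
  finally show ?thesis
    using signed_fact_nonzero by simp
qed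

lemma delta_cup_diff: "delta_cup f (\<lambda>xs. \<alpha> xs - c * \<beta> xs) ys = delta_cup f \<alpha> ys - c * delta_cup f \<beta> ys"
  by (cases ys rule: remdups_adj.cases) (simp_all add: algebra_simps)

text \<open>
  The primitive for \<open>Y # Zs\<close> built from a primitive \<open>\<psi>\<close> for \<open>Zs\<close>: the first two terms are
  primitives of the two new wedges up to cup terms (\<open>coboundary_homotopy\<close>), and the last one
  cancels these cup terms by the Leibniz rule. The terms with \<open>hd\<close> make each summand vanish on tuples
  that \<open>Y\<close> does not separate.
\<close>

definition primitive_Cons :: "'a set \<Rightarrow> 'a set list \<Rightarrow> ('a list \<Rightarrow> complex) \<Rightarrow> 'a list \<Rightarrow> complex" where
  "primitive_Cons Y Zs \<psi> xs =
     (sum_list (map (ind Y) xs) - of_nat (Suc (length Zs)) * ind Y (hd xs)) * half_space_cocycle Zs xs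
   + signed_fact (Suc (length Zs)) *
       ((sum_list (map (ind (Y \<inter> \<Inter>(set Zs))) xs) - ind Y (hd xs)) * cell_cocycle Zs xs)
   - of_nat (Suc (length Zs)) * delta_cup (ind Y) \<psi> xs"

lemma coboundary_primitive_Cons:
  assumes primitive: "\<And>xs. coboundary \<psi> xs = half_space_cocycle Zs xs - signed_fact (length Zs) * cell_cocycle Zs xs"
    and "\<psi> [] = 0"
  shows "coboundary (primitive_Cons Y Zs \<psi>) xs
    = half_space_cocycle (Y # Zs) xs - signed_fact (Suc (length Zs)) * cell_cocycle (Y # Zs) xs"
proof -
  let ?m = "of_nat (Suc (length Zs)) :: complex"
  have "half_space_cocycle Zs [] = 0" "cell_cocycle Zs [] = 0"
    by (simp_all add: half_space_cocycle_def cell_cocycle_def wedge_length)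
  note nil = this
  have homotopy1: "coboundary (\<lambda>xs. (sum_list (map (ind Y) xs) - ?m * ind Y (hd xs)) * half_space_cocycle Zs xs) xs
      = half_space_cocycle (Y # Zs) xs - ?m * delta_cup (ind Y) (half_space_cocycle Zs) xs"
    unfolding half_space_cocycle_Cons
    using coboundary_homotopy[of "half_space_cocycle Zs", OF coboundary_half_space_cocycle nil(1)]
    by simp
  have homotopy2: "coboundary (\<lambda>xs. (sum_list (map (ind (Y \<inter> \<Inter>(set Zs))) xs) - ind Y (hd xs))
        * cell_cocycle Zs xs) xs
      = - cell_cocycle (Y # Zs) xs - delta_cup (ind Y) (cell_cocycle Zs) xs"
    unfolding cell_cocycle_Cons
    using coboundary_homotopy[OF coboundary_cell_cocycle[OF primitive] nil(2), where c = 1]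
    by simp
  have "coboundary \<psi> = (\<lambda>xs. half_space_cocycle Zs xs - signed_fact (length Zs) * cell_cocycle Zs xs)"
    using primitive by (rule ext)
  then have leibniz: "coboundary (delta_cup (ind Y) \<psi>) xs
      = - delta_cup (ind Y) (half_space_cocycle Zs) xs + signed_fact (length Zs) * delta_cup (ind Y) (cell_cocycle Zs) xs"
    by (simp add: coboundary_delta_cup[where \<phi> = \<psi>, OF \<open>\<psi> [] = 0\<close>] delta_cup_diff)
  show ?thesis
    unfolding primitive_Cons_def[abs_def] coboundary_diff coboundary_add coboundary_cmult
      homotopy1 homotopy2 leibniz
    by (simp add: signed_fact_Suc algebra_simps)
qed

lemma sum_list_map_ind_not_separates:
  assumes "\<not> separates Y xs" "xs \<noteq> []"
  shows "sum_list (map (ind Y) xs) = of_nat (length xs) * ind Y (hd xs)"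
proof -
  have "map (ind Y) xs = map (\<lambda>_. ind Y (hd xs)) xs"
    by (rule map_cong) (use not_separates_ind[OF assms(1) _ hd_in_set[OF assms(2)]] in auto)
  then show ?thesis
    by (simp only: sum_list_triv)
qed

lemma same_sides_Cons_ind:
  assumes "same_sides (Y # Zs) x y"
  shows "ind Y x = ind Y y" "ind (Y \<inter> \<Inter>(set Zs)) x = ind (Y \<inter> \<Inter>(set Zs)) y"
  using assms by (auto intro!: ind_cong simp: same_sides_def)

lemma transverse_cochain_homotopy_half_space:
  "transverse_cochain (Y # Zs) (Suc (length Zs))
    (\<lambda>xs. (sum_list (map (ind Y) xs) - of_nat (Suc (length Zs)) * ind Y (hd xs)) * half_space_cocycle Zs xs)"
proof (rule transverse_cochain_mult[OF transverse_cochain_half_space_cocycle])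
  show "pattern_invariant (Y # Zs) (\<lambda>xs. sum_list (map (ind Y) xs) - of_nat (Suc (length Zs)) * ind Y (hd xs))"
    by (intro pattern_invariant_combine[where h = "\<lambda>a b. a - of_nat (Suc (length Zs)) * b"]
        pattern_invariant_map[where h = sum_list] pattern_invariant_hd same_sides_Cons_ind)
  fix xs assume nonzero: "half_space_cocycle Zs xs \<noteq> 0" and "\<not> separates Y xs"
  from nonzero have length: "length xs = Suc (length Zs)"
    unfolding half_space_cocycle_def by (rule wedge_nonzero_length)
  then have "xs \<noteq> []" by auto
  then show "sum_list (map (ind Y) xs) - of_nat (Suc (length Zs)) * ind Y (hd xs) = 0"
    using sum_list_map_ind_not_separates[OF \<open>\<not> separates Y xs\<close>] length by simp
qed

lemma sum_list_ind_Inter_eq_1: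
  assumes "cell_cocycle Zs xs \<noteq> 0"
  shows "sum_list (map (ind (\<Inter>(set Zs))) xs) = 1"
proof -
  have "sum_list (map (ind (cell Zs 0)) xs) = 1"
    using assms disjoint_family_cell
    by (intro sum_list_indicator_eq_1_if_wedge_nonzero) (simp_all add: cell_cocycle_def)
  then show ?thesis
    by (simp add: cell_def)
qed

lemma transverse_cochain_homotopy_cell:
  "transverse_cochain (Y # Zs) (Suc (length Zs))
    (\<lambda>xs. (sum_list (map (ind (Y \<inter> \<Inter>(set Zs))) xs) - ind Y (hd xs)) * cell_cocycle Zs xs)"
proof (rule transverse_cochain_mult[OF transverse_cochain_cell_cocycle])
  show "pattern_invariant (Y # Zs) (\<lambda>xs. sum_list (map (ind (Y \<inter> \<Inter>(set Zs))) xs) - ind Y (hd xs))"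
    by (intro pattern_invariant_combine[where h = "(-)"]
        pattern_invariant_map[where h = sum_list] pattern_invariant_hd same_sides_Cons_ind)
  fix xs assume nonzero: "cell_cocycle Zs xs \<noteq> 0" and "\<not> separates Y xs"
  from nonzero have "length xs = Suc (length Zs)"
    unfolding cell_cocycle_def by (rule wedge_nonzero_length)
  then have hd: "hd xs \<in> set xs"
    by (intro hd_in_set) auto
  from \<open>\<not> separates Y xs\<close> show "sum_list (map (ind (Y \<inter> \<Inter>(set Zs))) xs) - ind Y (hd xs) = 0"
    unfolding not_separates_iff
  proof
    assume "\<forall>x\<in>set xs. x \<in> Y"
    then have "map (ind (Y \<inter> \<Inter>(set Zs))) xs = map (ind (\<Inter>(set Zs))) xs" "ind Y (hd xs) = 1"
      using hd by (auto intro!: map_cong simp: ind_def indicator_def)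
    with sum_list_ind_Inter_eq_1[OF nonzero] show ?thesis
      by (simp only:) simp
  next
    assume "\<forall>x\<in>set xs. x \<notin> Y"
    then have "map (ind (Y \<inter> \<Inter>(set Zs))) xs = map (\<lambda>_. 0) xs" "ind Y (hd xs) = 0"
      using hd by auto
    then show ?thesis
      by (simp only: sum_list_triv) simp
  qed
qed

lemma transverse_cochain_primitive_Cons:
  assumes "transverse_cochain Zs (length Zs) \<psi>" "\<psi> [] = 0"
  shows "transverse_cochain (Y # Zs) (Suc (length Zs)) (primitive_Cons Y Zs \<psi>)"
  unfolding primitive_Cons_def[abs_def]
  using transverse_cochain_homotopy_half_space transverse_cochain_homotopy_cell
    transverse_cochain_delta_cup[OF assms]
  by (intro transverse_cochain_combine[where h = "(-)"] transverse_cochain_combine[where h = "(+)"]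
      transverse_cochain_cmult) simp_all

lemma primitive_Cons_Nil: "primitive_Cons Y Zs \<psi> [] = 0"
  by (simp add: primitive_Cons_def half_space_cocycle_def cell_cocycle_def wedge_length)

lemma exists_transverse_primitive:
  "\<exists>\<psi>. transverse_cochain Ys (length Ys) \<psi> \<and> \<psi> [] = 0 \<and>
     (\<forall>xs. coboundary \<psi> xs = half_space_cocycle Ys xs - signed_fact (length Ys) * cell_cocycle Ys xs)"
proof (induction Ys)
  case Nil
  have "half_space_cocycle [] xs = cell_cocycle [] xs" for xs :: "'a list"
    unfolding half_space_cocycle_def cell_cocycle_def by (rule wedge_cong) (simp add: cell_def ind_def)
  then show ?case
    by (intro exI[of _ "\<lambda>_. 0"])
      (simp add: transverse_cochain_def pattern_invariant_def coboundary_def signed_fact_def)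
next
  case (Cons Y Zs)
  then obtain \<psi> where "transverse_cochain Zs (length Zs) \<psi>" "\<psi> [] = 0"
    "\<And>xs. coboundary \<psi> xs = half_space_cocycle Zs xs - signed_fact (length Zs) * cell_cocycle Zs xs"
    by blast
  then show ?case
    by (intro exI[of _ "primitive_Cons Y Zs \<psi>"])
      (simp add: transverse_cochain_primitive_Cons coboundary_primitive_Cons primitive_Cons_Nil)
qed

section \<open>Transverse cochains are coarse cochains\<close>

definition pattern :: "'a set list \<Rightarrow> 'a list \<Rightarrow> bool list list" where
  "pattern Ys xs = map (\<lambda>x. map (\<lambda>Y. x \<in> Y) Ys) xs"

lemma list_all2_same_sides_iff: "list_all2 (same_sides Ys) xs ys \<longleftrightarrow> pattern Ys xs = pattern Ys ys"
proof -
  have same_sides: "same_sides Ys = (\<lambda>x y. map (\<lambda>Y. x \<in> Y) Ys = map (\<lambda>Y. y \<in> Y) Ys)"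
    by (simp add: fun_eq_iff same_sides_def map_eq_conv)
  have "pattern Ys xs = pattern Ys ys \<longleftrightarrow> list_all2 (=) (pattern Ys xs) (pattern Ys ys)"
    by (simp only: list.rel_eq)
  also have "\<dots> \<longleftrightarrow> list_all2 (same_sides Ys) xs ys"
    by (simp only: pattern_def list_all2_map1 list_all2_map2 same_sides)
  finally show ?thesis ..
qed

lemma pattern_invariant_factors:
  assumes "pattern_invariant Ys \<phi>"
  obtains g where "\<And>xs. \<phi> xs = g (pattern Ys xs)"
proof
  have invariant: "pattern Ys xs = pattern Ys ys \<Longrightarrow> \<phi> xs = \<phi> ys" for xs ys
    using assms unfolding pattern_invariant_def list_all2_same_sides_iff by blast
  fix xs
  have "pattern Ys (inv_into UNIV (pattern Ys) (pattern Ys xs)) = pattern Ys xs"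
    by (rule f_inv_into_f) simp
  then show "\<phi> xs = \<phi> (inv_into UNIV (pattern Ys) (pattern Ys xs))"
    by (rule invariant[symmetric])
qed

lemma pattern_invariant_bounded:
  assumes "pattern_invariant Ys \<phi>" "\<And>xs. \<phi> xs \<noteq> 0 \<Longrightarrow> length xs = N"
  obtains C where "\<And>xs. norm (\<phi> xs) \<le> C"
proof -
  obtain g where g: "\<And>xs. \<phi> xs = g (pattern Ys xs)"
    using pattern_invariant_factors[OF assms(1)] by blast
  define P :: "bool list list set" where "P = {L. set L \<subseteq> {l. set l \<subseteq> UNIV \<and> length l = length Ys} \<and> length L = N}"
  have "finite P"
    unfolding P_def by (intro finite_lists_length_eq) simp_all
  have "norm (\<phi> xs) \<le> (\<Sum>L\<in>P. norm (g L))" for xs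
  proof (cases "\<phi> xs = 0")
    case False
    then have "pattern Ys xs \<in> P"
      using assms(2) by (auto simp: P_def pattern_def)
    then show ?thesis
      unfolding g using \<open>finite P\<close> by (intro member_le_sum) auto
  qed (simp add: sum_nonneg)
  then show ?thesis using that by blast
qed

lemma pattern_map_upt_eq_iff:
  "pattern Ys (map f [0..<n]) = L \<longleftrightarrow>
    length L = n \<and> (\<forall>i<n. length (L ! i) = length Ys \<and> (\<forall>j<length Ys. L ! i ! j = (f i \<in> Ys ! j)))"
proof -
  have map_eq_iff: "map g xs = L \<longleftrightarrow> length L = length xs \<and> (\<forall>i<length xs. L ! i = g (xs ! i))"
    "L = map g xs \<longleftrightarrow> length L = length xs \<and> (\<forall>i<length xs. L ! i = g (xs ! i))"
    for g :: "'b \<Rightarrow> 'c" and xs L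
    by (auto simp: list_eq_iff_nth_eq)
  have "pattern Ys (map f [0..<n]) = map (\<lambda>i. map (\<lambda>Y. f i \<in> Y) Ys) [0..<n]"
    by (simp add: pattern_def)
  then show ?thesis
    by (simp only: map_eq_iff(1) length_upt nth_upt) (simp add: map_eq_iff(2))
qed

lemma pattern_invariant_measurable:
  fixes \<phi> :: "'a::topological_space list \<Rightarrow> complex"
  assumes "pattern_invariant Ys \<phi>" and borel: "\<forall>Y\<in>set Ys. Y \<in> sets borel"
  shows "(\<phi> \<circ> (\<lambda>f. map f [0..<Suc k])) \<in> borel_measurable (PiM {..k} (\<lambda>_. borel))"
proof -
  let ?M = "PiM {..k} (\<lambda>_. borel :: 'a measure)"
  obtain g where g: "\<And>xs. \<phi> xs = g (pattern Ys xs)"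
    using pattern_invariant_factors[OF assms(1)] by blast
  have [measurable]: "Ys ! j \<in> sets borel" if "j \<in> {..<length Ys}" for j
    using borel that by auto
  have "(\<lambda>f. pattern Ys (map f [0..<Suc k])) \<in> measurable ?M (count_space UNIV)"
    unfolding measurable_count_space_eq2_countable
  proof (intro conjI ballI)
    fix L :: "bool list list"
    have "(\<lambda>f. pattern Ys (map f [0..<Suc k])) -` {L} \<inter> space ?M
        = {f \<in> space ?M. pattern Ys (map f [0..<Suc k]) = L}"
      by auto
    also have "\<dots> = {f \<in> space ?M. length L = Suc k \<and> (\<forall>i\<in>{..k}. length (L ! i) = length Ys \<and>
          (\<forall>j\<in>{..<length Ys}. L ! i ! j = (f i \<in> Ys ! j)))}"
      by (intro Collect_cong conj_cong refl)
        (simp only: pattern_map_upt_eq_iff less_Suc_eq_le atMost_iff lessThan_iff Ball_def)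
    also have "\<dots> \<in> sets ?M"
      by measurable
    finally show "(\<lambda>f. pattern Ys (map f [0..<Suc k])) -` {L} \<inter> space ?M \<in> sets ?M" .
  qed simp
  then show ?thesis
    by (simp add: comp_def g measurable_compose[OF _ measurable_count_space_eq1[THEN iffD2]])
qed

lemma separates_imp_mem_thick:
  assumes "separates Y xs" "\<And>z. z \<in> set xs \<Longrightarrow> dist z x \<le> R"
  shows "x \<in> thick Y R \<inter> thick (- Y) R"
proof -
  obtain z1 z2 where z: "z1 \<in> set xs" "z1 \<in> Y" "z2 \<in> set xs" "z2 \<in> - Y"
    using assms(1) unfolding separates_def by blast
  have "infdist x Y \<le> R" "infdist x (- Y) \<le> R"
    using infdist_le[OF z(2), of x] infdist_le[OF z(4), of x] assms(2)[OF z(1)] assms(2)[OF z(3)]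
    by (simp_all add: dist_commute)
  with z show ?thesis
    unfolding thick_def by auto
qed

lemma bounded_tuples_support_near_diagonal:
  fixes \<phi> :: "'a::metric_space list \<Rightarrow> complex"
  assumes "transverse_cochain Ys (Suc k) \<phi>"
    and bounded: "\<forall>R\<ge>0. bounded (\<Inter>Y\<in>set Ys. thick Y R \<inter> thick (- Y) R)"
  shows "bounded_tuples ({xs. \<phi> xs \<noteq> 0} \<inter> diag_thick k R)"
proof (cases "R \<ge> 0")
  case True
  let ?S = "\<Inter>Y\<in>set Ys. thick Y R \<inter> thick (- Y) R"
  from bounded True have "bounded ?S" by blast
  then obtain c r where cr: "\<forall>y\<in>?S. dist c y \<le> r"
    unfolding bounded_def by blast
  have "dist (xs ! i) c \<le> R + r"
    if nonzero: "\<phi> xs \<noteq> 0" and diag: "xs \<in> diag_thick k R" and "i < length xs" for xs i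
  proof -
    obtain x where x: "\<forall>j<Suc k. dist (xs ! j) x \<le> R" and len: "length xs = Suc k"
      using diag unfolding diag_thick_def by blast
    have near: "dist z x \<le> R" if z: "z \<in> set xs" for z
    proof -
      obtain j where "j < length xs" "xs ! j = z"
        using z by (auto simp: in_set_conv_nth)
      then show ?thesis using x len by auto
    qed
    have "x \<in> ?S"
    proof (rule INT_I)
      fix Y assume "Y \<in> set Ys"
      then show "x \<in> thick Y R \<inter> thick (- Y) R"
        using transverse_cochainD(2)[OF assms(1) nonzero] near by (intro separates_imp_mem_thick)
    qed
    then have "dist c x \<le> r"
      using cr by blast
    moreover have "dist (xs ! i) x \<le> R"
      using near \<open>i < length xs\<close> by simp
    ultimately show ?thesis
      using dist_triangle[of "xs ! i" c x] by (simp add: dist_commute)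
  qed
  then show ?thesis
    unfolding bounded_tuples_def by blast
next
  case False
  have "xs \<notin> diag_thick k R" for xs :: "'a list"
  proof
    assume "xs \<in> diag_thick k R"
    then obtain x where "dist (xs ! 0) x \<le> R"
      unfolding diag_thick_def by blast
    with False show False
      by (meson zero_le_dist order_trans)
  qed
  then show ?thesis
    unfolding bounded_tuples_def by blast
qed

lemma transverse_cochain_in_CX:
  fixes \<phi> :: "'a::metric_space list \<Rightarrow> complex"
  assumes "transverse_cochain Ys (Suc k) \<phi>"
    and "\<forall>Y\<in>set Ys. Y \<in> sets borel"
    and "\<forall>R\<ge>0. bounded (\<Inter>Y\<in>set Ys. thick Y R \<inter> thick (- Y) R)"
  shows "\<phi> \<in> CX k"
proof -
  obtain C where C: "\<And>xs. norm (\<phi> xs) \<le> C"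
    using pattern_invariant_bounded[OF transverse_cochainD(3,1)[OF assms(1)]] by blast
  show ?thesis
    unfolding CX_def mem_Collect_eq
  proof (intro conjI allI impI)
    show "\<phi> xs = 0" if "length xs \<noteq> Suc k" for xs
      using transverse_cochainD(1)[OF assms(1)] that by blast
    show "\<exists>C. \<forall>xs\<in>S. norm (\<phi> xs) \<le> C" for S :: "'a list set"
      using C by blast
  qed (fact pattern_invariant_measurable[OF transverse_cochainD(3)[OF assms(1)] assms(2)]
      bounded_tuples_support_near_diagonal[OF assms(1,3)])+
qed

lemma same_HX_class_if_transverse_primitive:
  fixes \<theta>1 \<theta>2 \<psi> :: "'a::metric_space list \<Rightarrow> complex"
  assumes borel: "\<forall>Y\<in>set Ys. Y \<in> sets borel"
    and bounded: "\<forall>R\<ge>0. bounded (\<Inter>Y\<in>set Ys. thick Y R \<inter> thick (- Y) R)"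
    and \<theta>1: "transverse_cochain Ys (Suc n) \<theta>1" "\<And>xs. coboundary \<theta>1 xs = 0"
    and \<theta>2: "transverse_cochain Ys (Suc n) \<theta>2"
    and \<psi>: "transverse_cochain Ys n \<psi>" "\<psi> [] = 0" "\<And>xs. coboundary \<psi> xs = \<theta>1 xs - \<theta>2 xs"
  shows "same_HX_class n \<theta>1 \<theta>2"
proof -
  have "\<theta>2 = (\<lambda>xs. \<theta>1 xs - coboundary \<psi> xs)"
    using \<psi>(3) by (simp add: fun_eq_iff)
  then have "coboundary \<theta>2 xs = 0" for xs
    using \<theta>1(2) by (simp add: coboundary_diff coboundary_coboundary)
  then have cocycles: "cobdry n \<theta>1 = (\<lambda>_. 0)" "cobdry n \<theta>2 = (\<lambda>_. 0)"
    using \<theta>1(2) by (simp_all add: fun_eq_iff cobdry_eq_coboundary)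
  have outside: "\<theta>1 xs = 0" "\<theta>2 xs = 0" if "length xs \<noteq> Suc n" for xs
    using that transverse_cochainD(1)[OF \<theta>1(1)] transverse_cochainD(1)[OF \<theta>2] by blast+
  have "if n = 0 then \<theta>1 = \<theta>2
      else (\<exists>\<psi>\<in>CX (n - 1). (\<lambda>xs. \<theta>1 xs - \<theta>2 xs) = cobdry (n - 1) \<psi>)"
  proof (cases "n = 0")
    case True
    have "\<theta>1 xs = \<theta>2 xs" for xs
    proof (cases "length xs = Suc 0")
      case True
      then obtain x where "xs = [x]"
        by (cases xs) auto
      then have "coboundary \<psi> xs = 0"
        using \<psi>(2) by (simp add: coboundary_Cons)
      then show ?thesis
        using \<psi>(3)[of xs] by simp
    qed (use outside \<open>n = 0\<close> in simp)
    with True show ?thesis by auto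
  next
    case False
    then have "\<psi> \<in> CX (n - 1)"
      using transverse_cochain_in_CX[OF _ borel bounded] \<psi>(1) by simp
    moreover have "(\<lambda>xs. \<theta>1 xs - \<theta>2 xs) = cobdry (n - 1) \<psi>"
      using False \<psi>(3) outside by (auto simp: fun_eq_iff cobdry_eq_coboundary)
    ultimately show ?thesis
      using False by auto
  qed
  then show ?thesis
    unfolding same_HX_class_def
    using transverse_cochain_in_CX[OF \<theta>1(1) borel bounded] transverse_cochain_in_CX[OF \<theta>2 borel bounded]
      cocycles by simp
qed

lemma prod_ind_eq_ind_Inter: "finite J \<Longrightarrow> (\<Prod>j\<in>J. ind (X j) x) = ind (\<Inter>j\<in>J. X j) x"
  by (induction J rule: finite_induct) (simp_all add: ind_def indicator_inter_arith)

lemma half_space_cocycle_map_upt: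
  "half_space_cocycle (map X [1..<Suc n]) = wedge n (\<lambda>i. if i = 0 then (\<lambda>_. 1) else ind (X i))"
  unfolding half_space_cocycle_def by (auto intro!: wedge_cong simp del: upt_Suc)

lemma cell_cocycle_map_upt:
  "cell_cocycle (map X [1..<Suc n]) = wedge n (\<lambda>i x. if i = 0 then (\<Prod>j\<in>{1..n}. ind (X j) x)
      else ind (- X i) x * (\<Prod>j\<in>{i+1..n}. ind (X j) x))"
proof (rule ext, unfold cell_cocycle_def length_map length_upt diff_Suc_1, rule wedge_cong)
  fix i x assume "i \<le> n"
  have "set (drop i (map X [1..<Suc n])) = X ` {i+1..n}"
    by (auto simp: drop_map simp del: upt_Suc)
  moreover have "set (map X [1..<Suc n]) = X ` {1..n}"
    by (auto simp del: upt_Suc)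
  moreover have "map X [1..<Suc n] ! (i - 1) = X i" if "i \<noteq> 0"
    using that \<open>i \<le> n\<close> by (simp del: upt_Suc)
  ultimately show "ind (cell (map X [1..<Suc n]) i) x = (if i = 0 then (\<Prod>j\<in>{1..n}. ind (X j) x)
      else ind (- X i) x * (\<Prod>j\<in>{i+1..n}. ind (X j) x))"
    by (simp add: cell_def prod_ind_eq_ind_Inter del: upt_Suc) (simp add: ind_def indicator_inter_arith)
qed

theorem corollary5p8:
  fixes X :: "nat \<Rightarrow> 'a::heine_borel set" and n :: nat
  assumes "coarsely_transverse n X"
  defines "A \<equiv> (\<lambda>i x. if i = 0 then (\<Prod>j\<in>{1..n}. ind (X j) x)
                      else ind (- X i) x * (\<Prod>j\<in>{i+1..n}. ind (X j) x))"
  shows "same_HX_class n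
           (wedge n (\<lambda>i. if i = 0 then (\<lambda>_. 1) else ind (X i)))
           (\<lambda>xs. (-1)^n * of_nat (fact n) * wedge n A xs)"
proof -
  define Ys where "Ys = map X [1..<Suc n]"
  have Ys: "length Ys = n" "set Ys = X ` {1..n}"
    by (auto simp: Ys_def simp del: upt_Suc)
  have borel: "\<forall>Y\<in>set Ys. Y \<in> sets borel"
    and bounded: "\<forall>R\<ge>0. bounded (\<Inter>Y\<in>set Ys. thick Y R \<inter> thick (- Y) R)"
    using assms(1) by (simp_all add: coarsely_transverse_def Ys(2) image_image)
  obtain \<psi> where \<psi>: "transverse_cochain Ys n \<psi>" "\<psi> [] = 0"
    "\<And>xs. coboundary \<psi> xs = half_space_cocycle Ys xs - signed_fact n * cell_cocycle Ys xs"
    using exists_transverse_primitive[of Ys] Ys(1) by auto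
  have "same_HX_class n (half_space_cocycle Ys) (\<lambda>xs. signed_fact n * cell_cocycle Ys xs)"
    using transverse_cochain_half_space_cocycle[of Ys] transverse_cochain_cell_cocycle[of Ys] Ys(1)
    by (intro same_HX_class_if_transverse_primitive[OF borel bounded _ _ _ \<psi>])
      (simp_all add: coboundary_half_space_cocycle transverse_cochain_cmult)
  then show ?thesis
    unfolding Ys_def A_def half_space_cocycle_map_upt cell_cocycle_map_upt signed_fact_def .
qed

end
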